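(* Fix $k\in\mathbb{N}$ and positive constants $b_0,b_1,b_2,\lambda_0,\lambda_1$. There exists $C_1>0$ depending only on $b_0,b_1,\lambda_0,\lambda_1$ (and the fixed $k$) such that the following holds. Let $T\geq10$, $\ell<r$, $a^\pm\in\mathbb{R}^k$, $g:[\ell,r]\to\mathbb{R}$ Lipschitz with $g(\ell)=g(r)=0$, and $P\subset(\ell,r)$ finite, with $P'=P\cap[\ell+T^{1/2},r-T^{1/2}]$ non-empty. Suppose that $r-\ell\leq b_0T$, $|P|\leq b_0T$, $|g(x)-g(y)|\leq b_1T|x-y|$ for all $x,y$, $a^\pm_j-a^\pm_{j+1}\geq\lambda_0T^{1/2}$ for $j\in\{1,\dots,k-1\}$, $a^-_k-g(\ell)\geq\lambda_1T$, $a^+_k-g(r)\geq\lambda_1T$, $a^-_1-g(\ell)\leq b_2T^2$, $a^+_1-g(r)\leq b_2T^2$. Then $\mathbb{E}_{\mathrm{free}}[W'_+]\geq C_1^{-1}e^{-C_1T^3}$.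
   Context: $\mathbb{P}_{\mathrm{free}}$ (expectation $\mathbb{E}_{\mathrm{free}}$) is the law of $k$ independent Brownian bridges (diffusion parameter one) $\mathcal{L}=(\mathcal{L}_1,\dots,\mathcal{L}_k)$ on $[\ell,r]$ with $\mathcal{L}_j(\ell)=a^-_j$, $\mathcal{L}_j(r)=a^+_j$. $W'_+(\mathcal{L})=1$ if for all $p\in P'$ one has $\mathcal{L}_k(p)>g(p)$ and $\mathcal{L}_j(p)>\mathcal{L}_{j+1}(p)$ for all $j\in\{1,\dots,k-1\}$, and $0$ otherwise. *)

theory Defs
  imports "HOL-Probability.Probability"
begin

definition heat :: "real \<Rightarrow> real \<Rightarrow> real" where
  "heat s y = exp (- (y\<^sup>2) / (2 * s)) / sqrt (2 * pi * s)"

text \<open>Finite-dimensional density of a Brownian bridge (diffusion parameter one)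
  on [l,r] from a at time l to b at time r: joint Lebesgue density of the values
  xs at the strictly increasing interior times ts.\<close>
definition bridge_fdd_density ::
  "real \<Rightarrow> real \<Rightarrow> real \<Rightarrow> real \<Rightarrow> real list \<Rightarrow> real list \<Rightarrow> real" where
  "bridge_fdd_density l r a b ts xs =
     (let tt = l # ts @ [r]; xx = a # xs @ [b] in
       (\<Prod>i<length ts + 1. heat (tt ! (i+1) - tt ! i) (xx ! (i+1) - xx ! i))
       / heat (r - l) (b - a))"

text \<open>The event W'_+ evaluated on the values x (j,p) = L_j(p), j in {1..k}, p in P'.\<close>
definition W_plus' ::
  "nat \<Rightarrow> (real \<Rightarrow> real) \<Rightarrow> real set \<Rightarrow> (nat \<times> real \<Rightarrow> real) \<Rightarrow> bool" where
  "W_plus' k g P' x \<longleftrightarrow>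
     (\<forall>p\<in>P'. x (k, p) > g p \<and> (\<forall>j\<in>{1..<k}. x (j, p) > x (j+1, p)))"

text \<open>E_free[W'_+]: expectation of W'_+ under k independent Brownian bridges
  L_j on [l,r] with L_j(l) = am j, L_j(r) = ap j.  Since W'_+ only depends on the
  values at the finitely many points of P', the expectation is the integral of the
  indicator against the joint finite-dimensional density of these values.\<close>
definition E_free_W ::
  "nat \<Rightarrow> real \<Rightarrow> real \<Rightarrow> (nat \<Rightarrow> real) \<Rightarrow> (nat \<Rightarrow> real) \<Rightarrow> (real \<Rightarrow> real) \<Rightarrow> real set \<Rightarrow> ennreal"
  where
  "E_free_W k l r am ap g P' =
     (let ts = sorted_list_of_set P' in
       \<integral>\<^sup>+ x. ennreal ((\<Prod>j\<in>{1..k}. bridge_fdd_density l r (am j) (ap j) ts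
                          (map (\<lambda>p. x (j, p)) ts))
                   * (if W_plus' k g P' x then 1 else 0))
         \<partial>(PiM ({1..k} \<times> P') (\<lambda>_. lborel)))"

end

(* Restrict each of the k bridges to a tube around a guide curve: the chord between its
   endpoints raised by the tent t |-> b1 T min (t - l, r - t), which dominates g. At the points
   of P' the increments of the bridge must follow those of the guide up to c sqrt (dt), with
   c of order T^(-1/2). Such a path stays within W <= min lam0 lam1 sqrt T / 3 of its guide, so
   the k curves stay ordered and above g. On the tube the Gaussian bridge density is at least
   exp (- (|P'| c^2 + W^2 + (b1 T)^2 (r - l))) times the normalisations of the interior
   increments, while the volume of the tube cancels these normalisations up to a factor
   2 c / sqrt (2 pi) per point. Every loss is O(T^3); the largest one is the energy
   (b1 T)^2 (r - l) of the tent. *)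
theory Submission
  imports Defs
begin

section \<open>Integrals of products of increments\<close>

definition increment :: "('i \<Rightarrow> 'i option) \<Rightarrow> ('i \<Rightarrow> real) \<Rightarrow> ('i \<Rightarrow> real) \<Rightarrow> 'i \<Rightarrow> real" where
  "increment prev start x e = x e - (case prev e of None \<Rightarrow> start e | Some e' \<Rightarrow> x e')"

lemma measurable_increment [measurable]:
  assumes "e \<in> I" and "\<And>e'. prev e = Some e' \<Longrightarrow> e' \<in> I"
  shows "(\<lambda>x. increment prev start x e) \<in> borel_measurable (PiM I (\<lambda>_. lborel))"
  using assms by (cases "prev e") (auto simp: increment_def)

lemma measurable_prod_increment:
  fixes \<phi> :: "'i \<Rightarrow> real \<Rightarrow> ennreal"
  assumes "\<And>e. \<phi> e \<in> borel_measurable borel"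
    and "\<And>e e'. e \<in> I \<Longrightarrow> prev e = Some e' \<Longrightarrow> e' \<in> I"
  shows "(\<lambda>x. \<Prod>e\<in>I. \<phi> e (increment prev start x e)) \<in> borel_measurable (PiM I (\<lambda>_. lborel))"
proof (rule borel_measurable_prod_ennreal)
  fix e assume "e \<in> I"
  then show "(\<lambda>x. \<phi> e (increment prev start x e)) \<in> borel_measurable (PiM I (\<lambda>_. lborel))"
    using assms by (intro measurable_compose[OF measurable_increment assms(1)])
qed

text \<open>Integrating the coordinates in decreasing rank, each increment is a translate of a
  fresh variable, so the integral factorises by translation invariance of Lebesgue measure.\<close>
lemma nn_integral_PiM_prod_increment:
  fixes rank :: "'i \<Rightarrow> 'a::linorder" and \<phi> :: "'i \<Rightarrow> real \<Rightarrow> ennreal"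
  assumes "finite I" and [measurable]: "\<And>e. \<phi> e \<in> borel_measurable borel"
    and prev: "\<And>e e'. e \<in> I \<Longrightarrow> prev e = Some e' \<Longrightarrow> e' \<in> I \<and> rank e' < rank e"
  shows "(\<integral>\<^sup>+x. (\<Prod>e\<in>I. \<phi> e (increment prev start x e)) \<partial>PiM I (\<lambda>_. lborel))
       = (\<Prod>e\<in>I. \<integral>\<^sup>+u. \<phi> e u \<partial>lborel)"
  using assms(1) prev
proof (induction I rule: finite_ranking_induct[where f = rank])
  case empty
  then show ?case by (simp add: PiM_empty)
next
  case (insert m S)
  interpret product_sigma_finite "\<lambda>_::'i. (lborel::real measure)" by standard
  show ?case
  proof (cases "m \<in> S")
    case True
    then show ?thesis using insert by (simp add: insert_absorb)
  next
    case False
    have prev_S: "e' \<in> S \<and> rank e' < rank e" if "e \<in> S" "prev e = Some e'" for e e'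
      using insert.prems[of e e'] insert.hyps(2)[of e] that by force
    have prev_m: "e' \<in> S" if "prev m = Some e'" for e'
      using insert.prems[of m e'] that by auto
    define F where "F x = (\<Prod>e\<in>S. \<phi> e (increment prev start x e))" for x
    have F_upd: "F (x(m := y)) = F x" for x y
      unfolding F_def increment_def
      by (intro prod.cong refl) (use False prev_S in \<open>auto split: option.split\<close>)
    have m_upd: "increment prev start (x(m := y)) m = (increment prev start x m - x m) + y" for x y
      using prev_m False by (auto simp: increment_def split: option.split)
    have "(\<integral>\<^sup>+x. (\<Prod>e\<in>insert m S. \<phi> e (increment prev start x e)) \<partial>PiM (insert m S) (\<lambda>_. lborel))
        = (\<integral>\<^sup>+x. (\<integral>\<^sup>+y. (\<Prod>e\<in>insert m S. \<phi> e (increment prev start (x(m := y)) e)) \<partial>lborel)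
             \<partial>PiM S (\<lambda>_. lborel))"
      using insert.hyps(1) False insert.prems
      by (intro product_nn_integral_insert measurable_prod_increment) auto
    also have "\<dots> = (\<integral>\<^sup>+x. (\<integral>\<^sup>+y. \<phi> m ((increment prev start x m - x m) + y) * F x \<partial>lborel)
             \<partial>PiM S (\<lambda>_. lborel))"
      using insert.hyps(1) False by (simp add: F_def[symmetric] F_upd m_upd)
    also have "\<dots> = (\<integral>\<^sup>+x. (\<integral>\<^sup>+u. \<phi> m u \<partial>lborel) * F x \<partial>PiM S (\<lambda>_. lborel))"
      using nn_integral_real_affine[of "\<phi> m" 1] by (simp add: nn_integral_multc)
    also have "\<dots> = (\<integral>\<^sup>+u. \<phi> m u \<partial>lborel) * (\<Prod>e\<in>S. \<integral>\<^sup>+u. \<phi> e u \<partial>lborel)"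
      using insert.IH prev_S by (simp add: nn_integral_cmult F_def)
    finally show ?thesis using insert.hyps(1) False by simp
  qed
qed

section \<open>Gaussian bridge densities along a tube\<close>

lemma abs_diff_le_of_increment_tube:
  fixes t X Y :: "nat \<Rightarrow> real"
  assumes "X 0 = Y 0" and "c \<ge> 0" and "i \<le> n"
    and mono: "\<And>m. m < n \<Longrightarrow> t m \<le> t (Suc m)"
    and tube: "\<And>m. m < n \<Longrightarrow> \<bar>(X (Suc m) - X m) - (Y (Suc m) - Y m)\<bar> \<le> c * sqrt (t (Suc m) - t m)"
  shows "\<bar>X i - Y i\<bar> \<le> c * (real n + (t n - t 0)) / 2"
proof -
  have "X i - Y i = (\<Sum>m<i. (X (Suc m) - X m) - (Y (Suc m) - Y m))"
    using \<open>X 0 = Y 0\<close> sum_lessThan_telescope[of X i] sum_lessThan_telescope[of Y i]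
    by (simp add: sum_subtractf)
  then have "\<bar>X i - Y i\<bar> \<le> (\<Sum>m<i. \<bar>(X (Suc m) - X m) - (Y (Suc m) - Y m)\<bar>)"
    by (simp add: sum_abs)
  also have "\<dots> \<le> (\<Sum>m<n. \<bar>(X (Suc m) - X m) - (Y (Suc m) - Y m)\<bar>)"
    using \<open>i \<le> n\<close> by (intro sum_mono2) auto
  also have "\<dots> \<le> (\<Sum>m<n. c * ((1 + (t (Suc m) - t m)) / 2))"
  proof (rule sum_mono)
    fix m assume "m \<in> {..<n}"
    then have "sqrt (t (Suc m) - t m) \<le> (1 + (t (Suc m) - t m)) / 2"
      using arith_geo_mean_sqrt[of 1 "t (Suc m) - t m"] mono[of m] by simp
    then have "c * sqrt (t (Suc m) - t m) \<le> c * ((1 + (t (Suc m) - t m)) / 2)"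
      using \<open>c \<ge> 0\<close> by (rule mult_left_mono)
    then show "\<bar>(X (Suc m) - X m) - (Y (Suc m) - Y m)\<bar> \<le> c * ((1 + (t (Suc m) - t m)) / 2)"
      using tube[of m] \<open>m \<in> {..<n}\<close> by simp
  qed
  also have "\<dots> = c * (real n + (t n - t 0)) / 2"
    by (simp add: sum_distrib_left[symmetric] sum_divide_distrib[symmetric] sum.distrib
        sum_lessThan_telescope)
  finally show ?thesis .
qed

lemma sum_square_div_eq_chord_plus_deviation:
  fixes d D :: "'a \<Rightarrow> real"
  assumes "\<And>i. i \<in> A \<Longrightarrow> D i \<noteq> 0" and "sum D A \<noteq> 0"
  defines "s \<equiv> sum d A / sum D A"
  shows "(\<Sum>i\<in>A. (d i)\<^sup>2 / (2 * D i))
       = (sum d A)\<^sup>2 / (2 * sum D A) + (\<Sum>i\<in>A. (d i - s * D i)\<^sup>2 / (2 * D i))"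
proof -
  have "(\<Sum>i\<in>A. (d i - s * D i)\<^sup>2 / (2 * D i)) = (\<Sum>i\<in>A. (d i)\<^sup>2 / (2 * D i) - s * d i + s\<^sup>2 * D i / 2)"
    using assms(1) by (intro sum.cong refl) (simp add: field_simps power2_eq_square)
  also have "\<dots> = (\<Sum>i\<in>A. (d i)\<^sup>2 / (2 * D i)) - s * sum d A + s\<^sup>2 * sum D A / 2"
    by (simp add: sum.distrib sum_subtractf sum_distrib_left sum_divide_distrib)
  also have "\<dots> = (\<Sum>i\<in>A. (d i)\<^sup>2 / (2 * D i)) - (sum d A)\<^sup>2 / (2 * sum D A)"
    using assms(2) by (simp add: s_def field_simps power2_eq_square)
  finally show ?thesis by simp
qed

lemma prod_heat_div_heat:
  fixes d D :: "'a \<Rightarrow> real"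
  assumes "finite A" and "A \<noteq> {}" and "\<And>i. i \<in> A \<Longrightarrow> D i > 0"
  defines "s \<equiv> sum d A / sum D A"
  shows "(\<Prod>i\<in>A. heat (D i) (d i)) / heat (sum D A) (sum d A)
       = exp (- (\<Sum>i\<in>A. (d i - s * D i)\<^sup>2 / (2 * D i)))
         * (sqrt (2 * pi * sum D A) * (\<Prod>i\<in>A. 1 / sqrt (2 * pi * D i)))"
proof -
  have R: "sum D A > 0"
    using assms by (intro sum_pos) auto
  have ratio: "exp (- (a + E)) * Q / (exp (- a) / S) = exp (- E) * (S * Q)" if "S > 0" for a E Q S :: real
  proof -
    have "exp (- (a + E)) = exp (- E) * exp (- a)"
      by (simp flip: exp_add)
    then show ?thesis
      using that by (simp add: field_simps)
  qed
  have heat_factor: "heat (D i) (d i) = exp (- ((d i)\<^sup>2 / (2 * D i))) * (1 / sqrt (2 * pi * D i))" for i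
    by (simp add: heat_def)
  have "(\<Prod>i\<in>A. heat (D i) (d i))
      = exp (- (\<Sum>i\<in>A. (d i)\<^sup>2 / (2 * D i))) * (\<Prod>i\<in>A. 1 / sqrt (2 * pi * D i))"
    unfolding heat_factor prod.distrib
    using exp_sum[OF assms(1), of "\<lambda>i. - ((d i)\<^sup>2 / (2 * D i))"] by (simp add: sum_negf)
  moreover have "(\<Sum>i\<in>A. (d i)\<^sup>2 / (2 * D i))
      = (sum d A)\<^sup>2 / (2 * sum D A) + (\<Sum>i\<in>A. (d i - s * D i)\<^sup>2 / (2 * D i))"
    using sum_square_div_eq_chord_plus_deviation[of A D d] assms(3) R
    unfolding s_def by (simp add: less_imp_neq[symmetric])
  moreover have "heat (sum D A) (sum d A) = exp (- ((sum d A)\<^sup>2 / (2 * sum D A))) / sqrt (2 * pi * sum D A)"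
    by (simp add: heat_def)
  ultimately show ?thesis
    using ratio[of "sqrt (2 * pi * sum D A)"] R by simp
qed

lemma power2_add_div_le:
  fixes z u D L :: real
  assumes "D > 0" and "\<bar>u\<bar> \<le> L * D"
  shows "(z + u)\<^sup>2 / (2 * D) \<le> z\<^sup>2 / D + L\<^sup>2 * D"
proof -
  have "(z + u)\<^sup>2 \<le> 2 * z\<^sup>2 + 2 * u\<^sup>2"
    using zero_le_power2[of "z - u"] unfolding power2_diff power2_sum by linarith
  also have "u\<^sup>2 \<le> (L * D)\<^sup>2"
    using assms(2) by (metis abs_ge_zero power2_abs power_mono)
  finally have "(z + u)\<^sup>2 / (2 * D) \<le> (2 * z\<^sup>2 + 2 * (L * D)\<^sup>2) / (2 * D)"
    using assms(1) by (intro divide_right_mono) auto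
  also have "\<dots> = z\<^sup>2 / D + L\<^sup>2 * D"
    using assms(1) by (simp add: field_simps power2_eq_square)
  finally show ?thesis .
qed

lemma power2_div_le_of_abs_le:
  fixes z c D :: real
  assumes "D > 0" and "\<bar>z\<bar> \<le> c * sqrt D"
  shows "z\<^sup>2 / D \<le> c\<^sup>2"
proof -
  have "z\<^sup>2 \<le> (c * sqrt D)\<^sup>2"
    using assms(2) by (metis abs_ge_zero power2_abs power_mono)
  then show ?thesis
    using assms(1) by (simp add: power_mult_distrib divide_le_eq)
qed

lemma bridge_energy_le_of_tube:
  fixes t X Y h :: "nat \<Rightarrow> real"
  assumes inc: "\<And>i. i \<le> n \<Longrightarrow> t i < t (Suc i)" and XN: "X (Suc n) = b"
    and Y: "\<And>i. Y i = a + (b - a) * ((t i - t 0) / (t (Suc n) - t 0)) + h i"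
    and hN: "h (Suc n) = 0"
    and lip: "\<And>i. i \<le> n \<Longrightarrow> \<bar>h (Suc i) - h i\<bar> \<le> L * (t (Suc i) - t i)"
    and tube: "\<And>i. i < n \<Longrightarrow> \<bar>(X (Suc i) - X i) - (Y (Suc i) - Y i)\<bar> \<le> c * sqrt (t (Suc i) - t i)"
    and near: "\<bar>X n - Y n\<bar> \<le> W" and last: "t (Suc n) - t n \<ge> 1"
  defines "s \<equiv> (b - a) / (t (Suc n) - t 0)"
  shows "(\<Sum>i\<le>n. ((X (Suc i) - X i) - s * (t (Suc i) - t i))\<^sup>2 / (2 * (t (Suc i) - t i)))
       \<le> real n * c\<^sup>2 + W\<^sup>2 + L\<^sup>2 * (t (Suc n) - t 0)"
proof -
  define D where "D i = t (Suc i) - t i" for i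
  define z where "z i = (X (Suc i) - X i) - (Y (Suc i) - Y i)" for i
  have D: "D i > 0" if "i \<le> n" for i
    using inc[OF that] by (simp add: D_def)
  define R where "R = t (Suc n) - t 0"
  have sum_D: "sum D {..n} = R"
    using sum_lessThan_telescope[of t "Suc n"] by (simp add: D_def R_def lessThan_Suc_atMost)
  moreover have "sum D {..n} > 0"
    using D by (intro sum_pos) auto
  ultimately have "R > 0"
    by simp
  then have "Y (Suc i) - Y i = s * D i + (h (Suc i) - h i)" for i
    by (simp add: Y s_def D_def field_simps flip: R_def)
  then have step: "(X (Suc i) - X i) - s * D i = z i + (h (Suc i) - h i)" for i
    by (simp add: z_def)
  have "z n = Y n - X n"
    using XN Y[of "Suc n"] hN \<open>R > 0\<close> by (simp add: z_def R_def)
  then have "(z n)\<^sup>2 \<le> W\<^sup>2"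
    using near by (metis abs_ge_zero abs_minus_commute power2_abs power_mono)
  moreover have "(z n)\<^sup>2 / D n \<le> (z n)\<^sup>2 / 1"
    using last by (intro divide_left_mono) (auto simp: D_def)
  ultimately have z_last: "(z n)\<^sup>2 / D n \<le> W\<^sup>2"
    by simp
  have "(\<Sum>i\<le>n. ((X (Suc i) - X i) - s * D i)\<^sup>2 / (2 * D i)) \<le> (\<Sum>i\<le>n. (z i)\<^sup>2 / D i + L\<^sup>2 * D i)"
    unfolding step using D lip by (intro sum_mono power2_add_div_le) (auto simp: D_def)
  also have "\<dots> = (\<Sum>i<n. (z i)\<^sup>2 / D i) + (z n)\<^sup>2 / D n + L\<^sup>2 * sum D {..n}"
    by (simp add: sum.distrib sum_distrib_left distrib_left lessThan_Suc_atMost[symmetric])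
  also have "\<dots> \<le> (\<Sum>i<n. c\<^sup>2) + W\<^sup>2 + L\<^sup>2 * sum D {..n}"
  proof -
    have "(\<Sum>i<n. (z i)\<^sup>2 / D i) \<le> (\<Sum>i<n. c\<^sup>2)"
      using tube D by (intro sum_mono power2_div_le_of_abs_le) (auto simp: z_def D_def)
    then show ?thesis
      using z_last by simp
  qed
  finally show ?thesis
    using sum_D by (simp add: D_def R_def)
qed

lemma bridge_density_ge_of_tube:
  fixes t X Y h :: "nat \<Rightarrow> real"
  assumes inc: "\<And>i. i \<le> n \<Longrightarrow> t i < t (Suc i)"
    and X0: "X 0 = a" and XN: "X (Suc n) = b"
    and Y: "\<And>i. Y i = a + (b - a) * ((t i - t 0) / (t (Suc n) - t 0)) + h i"
    and hN: "h (Suc n) = 0"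
    and lip: "\<And>i. i \<le> n \<Longrightarrow> \<bar>h (Suc i) - h i\<bar> \<le> L * (t (Suc i) - t i)"
    and tube: "\<And>i. i < n \<Longrightarrow> \<bar>(X (Suc i) - X i) - (Y (Suc i) - Y i)\<bar> \<le> c * sqrt (t (Suc i) - t i)"
    and near: "\<bar>X n - Y n\<bar> \<le> W" and last: "t (Suc n) - t n \<ge> 1"
  shows "(\<Prod>i\<le>n. heat (t (Suc i) - t i) (X (Suc i) - X i)) / heat (t (Suc n) - t 0) (b - a)
       \<ge> exp (- (real n * c\<^sup>2 + W\<^sup>2 + L\<^sup>2 * (t (Suc n) - t 0)))
         * (\<Prod>i<n. 1 / sqrt (2 * pi * (t (Suc i) - t i)))"
proof -
  define D where "D i = t (Suc i) - t i" for i
  define d where "d i = X (Suc i) - X i" for i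
  define R where "R = t (Suc n) - t 0"
  have D: "D i > 0" if "i \<le> n" for i
    using inc[OF that] by (simp add: D_def)
  have sum_D: "sum D {..n} = R" and sum_d: "sum d {..n} = b - a"
    using X0 XN sum_lessThan_telescope[of t "Suc n"] sum_lessThan_telescope[of X "Suc n"]
    by (simp_all add: D_def d_def R_def lessThan_Suc_atMost)
  have energy: "(\<Sum>i\<le>n. (d i - (b - a) / R * D i)\<^sup>2 / (2 * D i)) \<le> real n * c\<^sup>2 + W\<^sup>2 + L\<^sup>2 * R"
    using bridge_energy_le_of_tube[OF inc XN Y hN lip tube near last] by (simp add: D_def d_def R_def)
  have prod_nonneg: "(\<Prod>i<n. 1 / sqrt (2 * pi * D i)) \<ge> 0"
    by (intro prod_nonneg) (simp add: less_imp_le[OF D])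
  have "D n \<le> R"
    using member_le_sum[of n "{..n}" D] D sum_D by (simp add: less_imp_le)
  then have "sqrt (2 * pi * R) * (1 / sqrt (2 * pi * D n)) \<ge> 1"
    using D[of n] by (simp add: le_divide_eq)
  then have "(\<Prod>i<n. 1 / sqrt (2 * pi * D i)) * 1
      \<le> (\<Prod>i<n. 1 / sqrt (2 * pi * D i)) * (sqrt (2 * pi * R) * (1 / sqrt (2 * pi * D n)))"
    using prod_nonneg by (rule mult_left_mono)
  then have prefactor: "sqrt (2 * pi * R) * (\<Prod>i\<le>n. 1 / sqrt (2 * pi * D i)) \<ge> (\<Prod>i<n. 1 / sqrt (2 * pi * D i))"
    by (simp add: lessThan_Suc_atMost[symmetric] mult_ac)
  have "(\<Prod>i\<le>n. heat (D i) (d i)) / heat R (b - a)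
      = exp (- (\<Sum>i\<le>n. (d i - (b - a) / R * D i)\<^sup>2 / (2 * D i)))
        * (sqrt (2 * pi * R) * (\<Prod>i\<le>n. 1 / sqrt (2 * pi * D i)))"
    using prod_heat_div_heat[of "{..n}" D d] D sum_D sum_d by simp
  also have "\<dots> \<ge> exp (- (real n * c\<^sup>2 + W\<^sup>2 + L\<^sup>2 * R)) * (\<Prod>i<n. 1 / sqrt (2 * pi * D i))"
    using energy prefactor prod_nonneg by (intro mult_mono) auto
  finally show ?thesis
    by (simp add: D_def d_def R_def)
qed

section \<open>Bridges sampled at the points of a finite set\<close>

definition tent :: "real \<Rightarrow> real \<Rightarrow> real \<Rightarrow> real \<Rightarrow> real" where
  "tent l r L t = L * min (t - l) (r - t)"

lemma tent_left [simp]: "l \<le> r \<Longrightarrow> tent l r L l = 0"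
  and tent_right [simp]: "l \<le> r \<Longrightarrow> tent l r L r = 0"
  by (simp_all add: tent_def)

lemma abs_tent_diff_le: "L \<ge> 0 \<Longrightarrow> \<bar>tent l r L t - tent l r L s\<bar> \<le> L * \<bar>t - s\<bar>"
proof -
  assume "L \<ge> 0"
  have "\<bar>min (t - l) (r - t) - min (s - l) (r - s)\<bar> \<le> \<bar>t - s\<bar>"
    by (simp add: abs_le_iff min_def abs_if)
  then have "L * \<bar>min (t - l) (r - t) - min (s - l) (r - s)\<bar> \<le> L * \<bar>t - s\<bar>"
    using \<open>L \<ge> 0\<close> by (rule mult_left_mono)
  then show ?thesis
    using \<open>L \<ge> 0\<close> by (simp add: tent_def abs_mult right_diff_distrib[symmetric])
qed

lemma le_tent_if_lipschitz:
  assumes "g l = 0" and "g r = 0" and "t \<in> {l..r}"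
    and lip: "\<forall>x\<in>{l..r}. \<forall>y\<in>{l..r}. \<bar>g x - g y\<bar> \<le> L * \<bar>x - y\<bar>"
  shows "g t \<le> tent l r L t"
proof -
  have "l \<in> {l..r}" and "r \<in> {l..r}"
    using assms(3) by auto
  then have "\<bar>g t - g l\<bar> \<le> L * \<bar>t - l\<bar>" and "\<bar>g t - g r\<bar> \<le> L * \<bar>t - r\<bar>"
    using lip assms(3) by blast+
  then show ?thesis
    using assms by (auto simp: tent_def abs_le_iff min_def)
qed

locale time_grid =
  fixes l r :: real and P :: "real set"
  assumes finite_P: "finite P" and P_nonempty: "P \<noteq> {}" and P_inside: "P \<subseteq> {l<..<r}"
begin

abbreviation ts :: "real list" where "ts \<equiv> sorted_list_of_set P"

abbreviation n :: nat where "n \<equiv> card P"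

definition time :: "nat \<Rightarrow> real" where
  "time i = (l # ts @ [r]) ! i"

definition pos :: "real \<Rightarrow> nat" where
  "pos = the_inv_into {..<n} ((!) ts)"

definition sample :: "real \<Rightarrow> real \<Rightarrow> (real \<Rightarrow> real) \<Rightarrow> nat \<Rightarrow> real" where
  "sample a b y i = (a # map y ts @ [b]) ! i"

lemma l_less_r: "l < r"
  using P_nonempty P_inside by fastforce

lemma length_ts [simp]: "length ts = n"
  using finite_P by simp

lemma n_pos: "n > 0"
  using finite_P P_nonempty by (simp add: card_gt_0_iff)

lemma nth_ts_mem: "i < n \<Longrightarrow> ts ! i \<in> P"
  using finite_P by (metis length_ts nth_mem set_sorted_list_of_set)

lemma nth_ts_less: "i < j \<Longrightarrow> j < n \<Longrightarrow> ts ! i < ts ! j"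
  using sorted_wrt_nth_less[OF strict_sorted_list_of_set] by simp

lemma time_0 [simp]: "time 0 = l"
  and time_Suc: "i < n \<Longrightarrow> time (Suc i) = ts ! i"
  and time_last [simp]: "time (Suc n) = r"
  by (simp_all add: time_def nth_append)

lemma time_less: "i \<le> n \<Longrightarrow> time i < time (Suc i)"
proof (induction i)
  case 0
  then show ?case
    using n_pos nth_ts_mem[of 0] P_inside by (auto simp: time_Suc)
next
  case (Suc i)
  then have "time (Suc i) = ts ! i" and "ts ! i \<in> P"
    by (simp_all add: time_Suc nth_ts_mem)
  then show ?case
    using nth_ts_less[of i "Suc i"] P_inside Suc.prems
    by (cases "Suc i = n") (auto simp: time_Suc)
qed

lemma time_mono: "i \<le> j \<Longrightarrow> j \<le> Suc n \<Longrightarrow> time i \<le> time j"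
  by (induction j rule: dec_induct) (auto intro: order_trans less_imp_le[OF time_less])

lemma time_mem: "i \<le> Suc n \<Longrightarrow> time i \<in> {l..r}"
  using time_mono[of 0 i] time_mono[of i "Suc n"] by simp

lemma pos_nth [simp]: "i < n \<Longrightarrow> pos (ts ! i) = i"
  unfolding pos_def using finite_P
  by (intro the_inv_into_f_f inj_on_nth) (auto simp: distinct_sorted_list_of_set)

lemma pos_less: "p \<in> P \<Longrightarrow> pos p < n"
  and nth_pos [simp]: "p \<in> P \<Longrightarrow> ts ! pos p = p"
proof -
  assume "p \<in> P"
  then obtain i where "i < n" "p = ts ! i"
    using finite_P by (metis in_set_conv_nth length_ts set_sorted_list_of_set)
  then show "pos p < n" "ts ! pos p = p"
    by simp_all
qed

lemma sample_0 [simp]: "sample a b y 0 = a"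
  and sample_Suc: "i < n \<Longrightarrow> sample a b y (Suc i) = y (ts ! i)"
  and sample_last [simp]: "sample a b y (Suc n) = b"
  by (simp_all add: sample_def nth_append)

lemma bridge_fdd_density_eq:
  "bridge_fdd_density l r a b ts (map y ts)
     = (\<Prod>i\<le>n. heat (time (Suc i) - time i) (sample a b y (Suc i) - sample a b y i))
       / heat (r - l) (b - a)"
  by (simp add: bridge_fdd_density_def Let_def time_def sample_def lessThan_Suc_atMost)

definition guide :: "real \<Rightarrow> real \<Rightarrow> real \<Rightarrow> nat \<Rightarrow> real" where
  "guide L a b i = a + (b - a) * ((time i - l) / (r - l)) + tent l r L (time i)"

text \<open>Only the increments up to the last point of \<open>P\<close> are constrained; the final one, to \<open>b\<close>,
  is left free.\<close>
definition in_tube :: "real \<Rightarrow> real \<Rightarrow> real \<Rightarrow> real \<Rightarrow> (real \<Rightarrow> real) \<Rightarrow> bool" where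
  "in_tube c L a b y \<longleftrightarrow> (\<forall>i<n.
     \<bar>(sample a b y (Suc i) - sample a b y i) - (guide L a b (Suc i) - guide L a b i)\<bar>
       \<le> c * sqrt (time (Suc i) - time i))"

lemma guide_0 [simp]: "guide L a b 0 = a"
  using l_less_r by (simp add: guide_def)

lemma sample_near_guide:
  assumes "in_tube c L a b y" and "c \<ge> 0" and "i \<le> n"
  shows "\<bar>sample a b y i - guide L a b i\<bar> \<le> c * (real n + (r - l)) / 2"
proof -
  have "\<bar>sample a b y i - guide L a b i\<bar> \<le> c * (real n + (time n - time 0)) / 2"
    using assms time_less by (intro abs_diff_le_of_increment_tube) (auto simp: in_tube_def less_imp_le)
  also have "\<dots> \<le> c * (real n + (r - l)) / 2"
    using time_mem[of n] \<open>c \<ge> 0\<close> by (intro divide_right_mono mult_left_mono) auto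
  finally show ?thesis .
qed

lemma bridge_density_ge_in_tube:
  assumes "in_tube c L a b y" and "c \<ge> 0" and "L \<ge> 0" and last_gap: "P \<subseteq> {..r - 1}"
  defines "W \<equiv> c * (real n + (r - l)) / 2"
  shows "bridge_fdd_density l r a b ts (map y ts)
       \<ge> exp (- (real n * c\<^sup>2 + W\<^sup>2 + L\<^sup>2 * (r - l))) * (\<Prod>i<n. 1 / sqrt (2 * pi * (time (Suc i) - time i)))"
proof -
  have "time n \<in> P"
    using n_pos nth_ts_mem[of "n - 1"] time_Suc[of "n - 1"] by simp
  then have "time (Suc n) - time n \<ge> 1"
    using last_gap by auto
  moreover have "\<bar>tent l r L (time (Suc i)) - tent l r L (time i)\<bar> \<le> L * (time (Suc i) - time i)"
    if "i \<le> n" for i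
    using abs_tent_diff_le[OF \<open>L \<ge> 0\<close>, of l r "time (Suc i)" "time i"] time_less[OF that]
    by (simp add: abs_of_pos)
  ultimately have "(\<Prod>i\<le>n. heat (time (Suc i) - time i) (sample a b y (Suc i) - sample a b y i))
      / heat (time (Suc n) - time 0) (b - a)
    \<ge> exp (- (real n * c\<^sup>2 + W\<^sup>2 + L\<^sup>2 * (time (Suc n) - time 0)))
      * (\<Prod>i<n. 1 / sqrt (2 * pi * (time (Suc i) - time i)))"
    using assms sample_near_guide[OF assms(1,2), of n] time_less l_less_r
    by (intro bridge_density_ge_of_tube[where Y = "guide L a b" and h = "\<lambda>i. tent l r L (time i)"])
      (auto simp: guide_def in_tube_def)
  then show ?thesis
    by (simp add: bridge_fdd_density_eq)
qed

definition prev_point :: "nat \<times> real \<Rightarrow> (nat \<times> real) option" where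
  "prev_point = (\<lambda>(j, p). if pos p = 0 then None else Some (j, ts ! (pos p - 1)))"

lemma prev_point_less:
  assumes "e \<in> J \<times> P" and "prev_point e = Some e'"
  shows "e' \<in> J \<times> P \<and> snd e' < snd e"
proof -
  obtain j p where e: "e = (j, p)" "j \<in> J" "p \<in> P"
    using assms(1) by auto
  then have "e' = (j, ts ! (pos p - 1))" and "pos p > 0"
    using assms(2) by (auto simp: prev_point_def split: if_splits)
  then show ?thesis
    using e pos_less[of p] nth_ts_mem[of "pos p - 1"] nth_ts_less[of "pos p - 1" "pos p"] by auto
qed

lemma increment_prev_point:
  assumes "i < n"
  shows "increment prev_point (\<lambda>(j, _). a j) x (j, ts ! i)
       = sample (a j) b (\<lambda>p. x (j, p)) (Suc i) - sample (a j) b (\<lambda>p. x (j, p)) i"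
  using assms by (cases i) (simp_all add: increment_def prev_point_def sample_Suc)

definition tube_density :: "real \<Rightarrow> real \<Rightarrow> (nat \<Rightarrow> real) \<Rightarrow> (nat \<Rightarrow> real) \<Rightarrow> nat \<times> real \<Rightarrow> real \<Rightarrow> ennreal"
  where "tube_density c L am ap = (\<lambda>(j, p) u.
    let i = pos p; D = time (Suc i) - time i;
        m = guide L (am j) (ap j) (Suc i) - guide L (am j) (ap j) i
    in ennreal (1 / sqrt (2 * pi * D)) * indicator {m - c * sqrt D .. m + c * sqrt D} u)"

lemma borel_measurable_tube_density [measurable]:
  "tube_density c L am ap e \<in> borel_measurable borel"
  by (cases e) (simp add: tube_density_def Let_def)

text \<open>The tube width \<open>c\<close> times the diffusive scale exactly compensates the Gaussian normalisation.\<close>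
lemma nn_integral_tube_density:
  assumes "p \<in> P" and "c \<ge> 0"
  shows "(\<integral>\<^sup>+u. tube_density c L am ap (j, p) u \<partial>lborel) = ennreal (2 * c / sqrt (2 * pi))"
proof -
  define D where "D = time (Suc (pos p)) - time (pos p)"
  have "D > 0"
    using time_less[of "pos p"] pos_less[OF assms(1)] by (simp add: D_def)
  then have "(\<integral>\<^sup>+u. tube_density c L am ap (j, p) u \<partial>lborel) = ennreal (1 / sqrt (2 * pi * D)) * ennreal (2 * c * sqrt D)"
    using assms(2) by (simp add: tube_density_def Let_def D_def[symmetric] nn_integral_cmult_indicator mult.assoc)
  also have "\<dots> = ennreal (2 * c / sqrt (2 * pi))"
    using \<open>D > 0\<close> assms(2) by (simp add: ennreal_mult[symmetric] real_sqrt_mult mult.assoc)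
  finally show ?thesis .
qed

lemma prod_tube_density_increment:
  "(\<Prod>p\<in>P. tube_density c L am ap (j, p) (increment prev_point (\<lambda>(j, _). am j) x (j, p)))
     = ennreal (if in_tube c L (am j) (ap j) (\<lambda>p. x (j, p))
                then \<Prod>i<n. 1 / sqrt (2 * pi * (time (Suc i) - time i)) else 0)"
proof -
  define F where "F p = tube_density c L am ap (j, p) (increment prev_point (\<lambda>(j, _). am j) x (j, p))" for p
  define X where "X = sample (am j) (ap j) (\<lambda>p. x (j, p))"
  define G where "G = guide L (am j) (ap j)"
  define D where "D i = time (Suc i) - time i" for i
  define close where "close i \<longleftrightarrow> \<bar>(X (Suc i) - X i) - (G (Suc i) - G i)\<bar> \<le> c * sqrt (D i)" for i
  have D: "D i > 0" if "i < n" for i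
    using time_less[of i] that by (simp add: D_def)
  have "inj_on ((!) ts) {..<n}"
    by (intro inj_on_nth) auto
  moreover have "(!) ts ` {..<n} = P"
    using finite_P by (simp add: lessThan_atLeast0 nth_image)
  ultimately have "prod F P = (\<Prod>i<n. F (ts ! i))"
    using prod.reindex[of "(!) ts" "{..<n}" F] by simp
  also have "\<dots> = (\<Prod>i<n. ennreal (1 / sqrt (2 * pi * D i) * (if close i then 1 else 0)))"
    by (intro prod.cong refl)
      (auto simp: F_def tube_density_def Let_def increment_prev_point[where b = "ap j"] indicator_def close_def abs_le_iff
        X_def G_def D_def)
  also have "\<dots> = ennreal (\<Prod>i<n. 1 / sqrt (2 * pi * D i) * (if close i then 1 else 0))"
    using D by (intro prod_ennreal) (simp add: less_imp_le)
  also have "(\<Prod>i<n. 1 / sqrt (2 * pi * D i) * (if close i then 1 else 0))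
      = (if \<forall>i<n. close i then \<Prod>i<n. 1 / sqrt (2 * pi * D i) else 0)"
  proof (cases "\<forall>i<n. close i")
    case False
    then obtain i where "i < n" "\<not> close i"
      by auto
    then have "(\<Prod>i<n. 1 / sqrt (2 * pi * D i) * (if close i then 1 else 0)) = 0"
      by (intro prod_zero) auto
    with False show ?thesis
      by simp
  qed simp
  finally show ?thesis
    unfolding F_def in_tube_def close_def X_def G_def D_def .
qed

lemma prod_tube_densities_increment:
  "(\<Prod>e\<in>J \<times> P. tube_density c L am ap e (increment prev_point (\<lambda>(j, _). am j) x e))
     = ennreal (\<Prod>j\<in>J. if in_tube c L (am j) (ap j) (\<lambda>p. x (j, p))
                         then \<Prod>i<n. 1 / sqrt (2 * pi * (time (Suc i) - time i)) else 0)"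
proof -
  have "(\<Prod>i<n. 1 / sqrt (2 * pi * (time (Suc i) - time i))) \<ge> 0"
    using time_less by (auto simp: less_imp_le intro!: prod_nonneg)
  then show ?thesis
    using prod.cartesian_product[of "\<lambda>j p. tube_density c L am ap (j, p)
        (increment prev_point (\<lambda>(j, _). am j) x (j, p))" P J]
    by (simp add: prod_tube_density_increment prod_ennreal)
qed

lemma guide_Suc_pos:
  "p \<in> P \<Longrightarrow> guide L a b (Suc (pos p)) = a + (b - a) * ((p - l) / (r - l)) + tent l r L p"
  by (simp add: guide_def time_Suc pos_less)

end

locale separated_bridges = time_grid +
  fixes k :: nat and am ap :: "nat \<Rightarrow> real" and g :: "real \<Rightarrow> real" and L c :: real
  assumes k_pos: "k \<ge> 1" and L_nonneg: "L \<ge> 0" and c_nonneg: "c \<ge> 0"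
    and last_gap: "P \<subseteq> {..r - 1}"
    and g_left: "g l = 0" and g_right: "g r = 0"
    and g_lipschitz: "\<forall>x\<in>{l..r}. \<forall>y\<in>{l..r}. \<bar>g x - g y\<bar> \<le> L * \<bar>x - y\<bar>"
    and separated: "\<forall>j\<in>{1..<k}. am j - am (j + 1) > c * (real n + (r - l))
                                 \<and> ap j - ap (j + 1) > c * (real n + (r - l))"
    and above: "am k > c * (real n + (r - l)) / 2" "ap k > c * (real n + (r - l)) / 2"
begin

abbreviation W :: real where "W \<equiv> c * (real n + (r - l)) / 2"

lemma W_plus'_if_in_tubes:
  assumes "\<forall>j\<in>{1..k}. in_tube c L (am j) (ap j) (\<lambda>p. x (j, p))"
  shows "W_plus' k g P x"
  unfolding W_plus'_def
proof (intro ballI conjI)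
  fix p assume p: "p \<in> P"
  define \<theta> where "\<theta> = (p - l) / (r - l)"
  have \<theta>: "0 \<le> \<theta>" "\<theta> \<le> 1"
    using p P_inside by (auto simp: \<theta>_def divide_le_eq_1)
  have chord_gt: "A + (B - A) * \<theta> > d" if "A > d" "B > d" for A B d
    using convex_bound_lt[of "- A" "- d" "- B" "1 - \<theta>" \<theta>] that \<theta> by (simp add: algebra_simps)
  have near: "\<bar>x (j, p) - (am j + (ap j - am j) * \<theta> + tent l r L p)\<bar> \<le> W" if "j \<in> {1..k}" for j
    using sample_near_guide[of c L "am j" "ap j" "\<lambda>p. x (j, p)" "Suc (pos p)"] assms that p c_nonneg
    by (simp add: pos_less Suc_leI sample_Suc guide_Suc_pos \<theta>_def)
  have "g p \<le> tent l r L p"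
    using p P_inside g_left g_right g_lipschitz by (intro le_tent_if_lipschitz) auto
  moreover have "am k + (ap k - am k) * \<theta> > W"
    using above by (intro chord_gt)
  moreover have "k \<in> {1..k}"
    using k_pos by simp
  ultimately show "x (k, p) > g p"
    using abs_le_D2[OF near] by fastforce
  fix j assume j: "j \<in> {1..<k}"
  have "(am j - am (j + 1)) + ((ap j - ap (j + 1)) - (am j - am (j + 1))) * \<theta> > 2 * W"
    using separated j by (intro chord_gt) auto
  then have "(am j + (ap j - am j) * \<theta>) - (am (j + 1) + (ap (j + 1) - am (j + 1)) * \<theta>) > 2 * W"
    by (simp add: algebra_simps)
  moreover have "j \<in> {1..k}" and "j + 1 \<in> {1..k}"
    using j by auto
  note abs_le_D2[OF near[OF this(1)]] abs_le_D1[OF near[OF this(2)]]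
  ultimately show "x (j, p) > x (j + 1, p)"
    by linarith
qed

abbreviation energy :: real where "energy \<equiv> real n * c\<^sup>2 + W\<^sup>2 + L\<^sup>2 * (r - l)"

lemma tube_densities_le_integrand:
  "ennreal (exp (- energy) ^ k)
     * (\<Prod>e\<in>{1..k} \<times> P. tube_density c L am ap e (increment prev_point (\<lambda>(j, _). am j) x e))
   \<le> ennreal ((\<Prod>j\<in>{1..k}. bridge_fdd_density l r (am j) (ap j) ts (map (\<lambda>p. x (j, p)) ts))
               * (if W_plus' k g P x then 1 else 0))"
proof -
  define N where "N = (\<Prod>i<n. 1 / sqrt (2 * pi * (time (Suc i) - time i)))"
  have "N \<ge> 0"
    using time_less by (auto simp: N_def less_imp_le intro!: prod_nonneg)
  note prod_eq = prod_tube_densities_increment[where J = "{1..k}" and c = c and L = L and am = am and ap = ap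
      and x = x, folded N_def]
  show ?thesis
  proof (cases "\<forall>j\<in>{1..k}. in_tube c L (am j) (ap j) (\<lambda>p. x (j, p))")
    case True
    have "exp (- energy) ^ k * (\<Prod>j\<in>{1..k}. if in_tube c L (am j) (ap j) (\<lambda>p. x (j, p)) then N else 0)
        = (\<Prod>j\<in>{1..k}. exp (- energy) * N)"
      using True by (simp add: power_mult_distrib)
    also have "\<dots> \<le> (\<Prod>j\<in>{1..k}. bridge_fdd_density l r (am j) (ap j) ts (map (\<lambda>p. x (j, p)) ts))"
    proof (rule prod_mono)
      fix j assume "j \<in> {1..k}"
      then show "0 \<le> exp (- energy) * N
          \<and> exp (- energy) * N \<le> bridge_fdd_density l r (am j) (ap j) ts (map (\<lambda>p. x (j, p)) ts)"
        using True \<open>N \<ge> 0\<close> bridge_density_ge_in_tube[OF _ c_nonneg L_nonneg last_gap]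
        unfolding N_def by simp
    qed
    finally show ?thesis
      using True W_plus'_if_in_tubes prod_eq \<open>N \<ge> 0\<close> by (simp add: ennreal_mult[symmetric] ennreal_leI)
  next
    case False
    then have "(\<Prod>j\<in>{1..k}. if in_tube c L (am j) (ap j) (\<lambda>p. x (j, p)) then N else 0) = 0"
      by (intro prod_zero) auto
    then show ?thesis
      unfolding prod_eq by (simp only: ennreal_0 mult_zero_right zero_le)
  qed
qed

lemma E_free_W_ge:
  "E_free_W k l r am ap g P \<ge> ennreal (exp (- energy) ^ k * (2 * c / sqrt (2 * pi)) ^ (k * n))"
proof -
  have "(\<Prod>e\<in>{1..k} \<times> P. \<integral>\<^sup>+u. tube_density c L am ap e u \<partial>lborel)
      = (\<Prod>e\<in>{1..k} \<times> P. ennreal (2 * c / sqrt (2 * pi)))"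
    using c_nonneg by (intro prod.cong refl) (auto simp: nn_integral_tube_density)
  also have "\<dots> = ennreal ((2 * c / sqrt (2 * pi)) ^ (k * n))"
    using c_nonneg by (simp add: card_cartesian_product ennreal_power)
  finally have "ennreal (exp (- energy) ^ k * (2 * c / sqrt (2 * pi)) ^ (k * n))
      = ennreal (exp (- energy) ^ k) * (\<Prod>e\<in>{1..k} \<times> P. \<integral>\<^sup>+u. tube_density c L am ap e u \<partial>lborel)"
    using c_nonneg by (simp add: ennreal_mult)
  also have "\<dots> = (\<integral>\<^sup>+x. ennreal (exp (- energy) ^ k)
      * (\<Prod>e\<in>{1..k} \<times> P. tube_density c L am ap e (increment prev_point (\<lambda>(j, _). am j) x e))
      \<partial>PiM ({1..k} \<times> P) (\<lambda>_. lborel))"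
    using finite_P prev_point_less
    by (simp add: nn_integral_PiM_prod_increment[where rank = snd] nn_integral_cmult measurable_prod_increment)
  also have "\<dots> \<le> E_free_W k l r am ap g P"
    unfolding E_free_W_def Let_def by (intro nn_integral_mono tube_densities_le_integrand)
  finally show ?thesis .
qed

end

section \<open>Choice of the constants\<close>

lemma power_div_sqrt_ge_exp_cube:
  fixes q0 T K :: real and N :: nat
  assumes "T \<ge> 1" and "q0 > 0" and "K \<ge> 0" and "real N \<le> K * T"
  shows "(q0 / sqrt T) ^ N \<ge> exp (- (K * (\<bar>ln q0\<bar> + 1)) * T ^ 3)"
proof -
  have "ln (q0 / sqrt T) = ln q0 - ln T / 2"
    using assms(1,2) by (simp add: ln_div ln_sqrt)
  moreover have "ln T \<le> T"
    using ln_le_minus_one[of T] assms(1) by simp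
  ultimately have ln_ge: "ln (q0 / sqrt T) \<ge> - (\<bar>ln q0\<bar> + T)"
    using assms(1) by linarith
  have "K * (\<bar>ln q0\<bar> + 1) * T ^ 3 \<ge> K * T * (\<bar>ln q0\<bar> + T)"
  proof -
    have "T * (\<bar>ln q0\<bar> + T) = \<bar>ln q0\<bar> * T + T\<^sup>2"
      by (simp add: algebra_simps power2_eq_square)
    also have "\<dots> \<le> \<bar>ln q0\<bar> * T ^ 3 + T ^ 3"
      using assms(1) by (intro add_mono mult_left_mono power_increasing) (auto simp: power_increasing[of 1 3, simplified])
    finally have "T * (\<bar>ln q0\<bar> + T) \<le> (\<bar>ln q0\<bar> + 1) * T ^ 3"
      by (simp add: algebra_simps)
    from mult_left_mono[OF this assms(3)] show ?thesis
      by (simp add: mult.assoc)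
  qed
  also have "K * T * (\<bar>ln q0\<bar> + T) \<ge> real N * (\<bar>ln q0\<bar> + T)"
    using assms(1,4) by (intro mult_right_mono) auto
  finally have "real N * ln (q0 / sqrt T) \<ge> - (K * (\<bar>ln q0\<bar> + 1) * T ^ 3)"
    using ln_ge mult_left_mono[OF ln_ge, of "real N"] by linarith
  moreover have "(q0 / sqrt T) ^ N = exp (real N * ln (q0 / sqrt T))"
    using assms(1,2) by (simp add: exp_of_nat_mult)
  ultimately show ?thesis
    by simp
qed

lemma tube_scale_bounds:
  fixes T b0 b1 m R :: real and n :: nat
  assumes T: "T \<ge> 1" and "b0 > 0" and "m \<ge> 0" and n: "real n \<le> b0 * T" and "0 \<le> R" "R \<le> b0 * T"
  defines "c \<equiv> m / (3 * b0 * sqrt T)"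
  shows "c * (real n + R) / 2 \<le> m * sqrt T / 3"
    and "real n * c\<^sup>2 + (c * (real n + R) / 2)\<^sup>2 + (b1 * T)\<^sup>2 * R \<le> (m\<^sup>2 / (9 * b0) + m\<^sup>2 / 9 + b1\<^sup>2 * b0) * T ^ 3"
proof -
  define W where "W = c * (real n + R) / 2"
  have T3: "T \<le> T ^ 3" "1 \<le> T ^ 3"
    using T by (auto simp: power_increasing[of 1 3 T, simplified] one_le_power)
  have c: "c \<ge> 0" "c * (b0 * T) = m * sqrt T / 3"
    using assms(2,3) T by (auto simp: c_def field_simps real_sqrt_mult[symmetric])
  have "W \<le> c * (b0 * T + b0 * T) / 2"
    unfolding W_def using c(1) n assms(6) by (intro divide_right_mono mult_left_mono) (auto simp: mult.commute)
  also have "\<dots> = m * sqrt T / 3"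
    using c(2) by (simp add: mult.commute)
  finally show W: "c * (real n + R) / 2 \<le> m * sqrt T / 3"
    by (simp add: W_def)
  have "real n * c\<^sup>2 \<le> b0 * T * c\<^sup>2"
    using n by (simp add: mult_right_mono)
  also have "\<dots> = m\<^sup>2 / (9 * b0)"
    using assms(2) T by (simp add: c_def field_simps power2_eq_square)
  also have "\<dots> \<le> m\<^sup>2 / (9 * b0) * T ^ 3"
    using assms(2) mult_left_mono[OF T3(2), of "m\<^sup>2 / (9 * b0)"] by simp
  finally have e1: "real n * c\<^sup>2 \<le> m\<^sup>2 / (9 * b0) * T ^ 3" .
  have "W\<^sup>2 \<le> (m * sqrt T / 3)\<^sup>2"
    using W c(1) assms(5) by (intro power_mono) (auto simp: W_def)
  also have "\<dots> = m\<^sup>2 / 9 * T"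
    using T by (simp add: power_mult_distrib power_divide)
  also have "\<dots> \<le> m\<^sup>2 / 9 * T ^ 3"
    using T3 by (intro mult_left_mono) auto
  finally have e2: "W\<^sup>2 \<le> m\<^sup>2 / 9 * T ^ 3" .
  have "(b1 * T)\<^sup>2 * R \<le> (b1 * T)\<^sup>2 * (b0 * T)"
    using assms(6) by (intro mult_left_mono) auto
  also have "\<dots> = b1\<^sup>2 * b0 * T ^ 3"
    by (simp add: power2_eq_square power3_eq_cube)
  finally show "real n * c\<^sup>2 + (c * (real n + R) / 2)\<^sup>2 + (b1 * T)\<^sup>2 * R \<le> (m\<^sup>2 / (9 * b0) + m\<^sup>2 / 9 + b1\<^sup>2 * b0) * T ^ 3"
    using e1 e2 unfolding W_def by (simp add: algebra_simps)
qed

lemma card_points_le: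
  assumes "finite P" and "real (card P) \<le> b0 * T"
  shows "real (card (P \<inter> A)) \<le> b0 * T"
  using assms card_mono[OF assms(1), of "P \<inter> A"] by force

lemma separated_bridges_scaled:
  fixes k :: nat and b0 b1 lam0 lam1 m T l r :: real and am ap :: "nat \<Rightarrow> real"
    and g :: "real \<Rightarrow> real" and P :: "real set"
  assumes "k \<ge> 1" and "b0 > 0" and "b1 \<ge> 0" and m: "0 < m" "m \<le> lam0" "m \<le> lam1" and T: "T \<ge> 1"
    and "g l = 0" and "g r = 0" and "finite P" and "P \<subseteq> {l<..<r}"
    and "P \<inter> {l + sqrt T .. r - sqrt T} \<noteq> {}"
    and "r - l \<le> b0 * T" and "real (card P) \<le> b0 * T"
    and "\<forall>x\<in>{l..r}. \<forall>y\<in>{l..r}. \<bar>g x - g y\<bar> \<le> b1 * T * \<bar>x - y\<bar>"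
    and "\<forall>j\<in>{1..<k}. am j - am (j+1) \<ge> lam0 * sqrt T \<and> ap j - ap (j+1) \<ge> lam0 * sqrt T"
    and "am k - g l \<ge> lam1 * T" and "ap k - g r \<ge> lam1 * T"
  defines "P' \<equiv> P \<inter> {l + sqrt T .. r - sqrt T}" and "c \<equiv> m / (3 * b0 * sqrt T)"
  shows "separated_bridges l r P' k am ap g (b1 * T) c"
proof -
  have sqrt_T: "1 \<le> sqrt T" "sqrt T \<le> T"
    using T mult_left_mono[of 1 T T] by (auto intro!: real_le_lsqrt simp: power2_eq_square)
  have "r - l \<ge> 0"
    using assms(12) assms(11) by auto
  note W_le = tube_scale_bounds(1)[OF T \<open>b0 > 0\<close> less_imp_le[OF m(1)]
      card_points_le[OF assms(10,14), of "{l + sqrt T .. r - sqrt T}"] this assms(13),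
      folded c_def P'_def]
  have "m * sqrt T \<le> lam1 * T"
    using mult_mono[OF m(3) sqrt_T(2)] m(1,3) T by simp
  moreover have "0 < lam1 * T"
    using m T by simp
  ultimately have W_lam1: "m * sqrt T / 3 < lam1 * T"
    by linarith
  have W_lam0: "m * sqrt T / 3 < lam0 * sqrt T / 2"
    using m sqrt_T by simp
  show ?thesis
  proof unfold_locales
    show "finite P'" and "P' \<noteq> {}" and "P' \<subseteq> {l<..<r}"
      using assms(10-12) by (auto simp: P'_def)
    show "P' \<subseteq> {..r - 1}"
    proof
      fix p assume "p \<in> P'"
      then have "p \<le> r - sqrt T"
        by (simp add: P'_def)
      then show "p \<in> {..r - 1}"
        using sqrt_T(1) unfolding atMost_iff by linarith
    qed
    show "c \<ge> 0" and "b1 * T \<ge> 0"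
      using m(1) \<open>b0 > 0\<close> \<open>b1 \<ge> 0\<close> T by (simp_all add: c_def)
    show "\<forall>j\<in>{1..<k}. am j - am (j + 1) > c * (real (card P') + (r - l))
        \<and> ap j - ap (j + 1) > c * (real (card P') + (r - l))"
      using assms(16) W_le W_lam0 by fastforce
    show "am k > c * (real (card P') + (r - l)) / 2" and "ap k > c * (real (card P') + (r - l)) / 2"
      using assms(8,9,17,18) W_le W_lam1 by auto
  qed (use assms in auto)
qed

lemma E_free_W_ge_tube_bound:
  fixes k :: nat and b0 b1 lam0 lam1 m T l r :: real and am ap :: "nat \<Rightarrow> real"
    and g :: "real \<Rightarrow> real" and P :: "real set"
  assumes "k \<ge> 1" and "b0 > 0" and "b1 \<ge> 0" and m: "0 < m" "m \<le> lam0" "m \<le> lam1" and T: "T \<ge> 1"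
    and "g l = 0" and "g r = 0" and "finite P" and "P \<subseteq> {l<..<r}"
    and "P \<inter> {l + sqrt T .. r - sqrt T} \<noteq> {}"
    and "r - l \<le> b0 * T" and "real (card P) \<le> b0 * T"
    and "\<forall>x\<in>{l..r}. \<forall>y\<in>{l..r}. \<bar>g x - g y\<bar> \<le> b1 * T * \<bar>x - y\<bar>"
    and "\<forall>j\<in>{1..<k}. am j - am (j+1) \<ge> lam0 * sqrt T \<and> ap j - ap (j+1) \<ge> lam0 * sqrt T"
    and "am k - g l \<ge> lam1 * T" and "ap k - g r \<ge> lam1 * T"
  defines "P' \<equiv> P \<inter> {l + sqrt T .. r - sqrt T}" and "c \<equiv> m / (3 * b0 * sqrt T)"
  shows "E_free_W k l r am ap g P'
    \<ge> ennreal (exp (- ((m\<^sup>2 / (9 * b0) + m\<^sup>2 / 9 + b1\<^sup>2 * b0) * T ^ 3)) ^ k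
                * (2 * m / (3 * b0 * sqrt (2 * pi)) / sqrt T) ^ (k * card P'))"
proof -
  interpret separated_bridges l r P' k am ap g "b1 * T" c
    unfolding P'_def c_def by (rule separated_bridges_scaled[OF assms(1-18)])
  have "r - l \<ge> 0"
    using l_less_r by simp
  from tube_scale_bounds(2)[OF T \<open>b0 > 0\<close> less_imp_le[OF m(1)]
      card_points_le[OF assms(10,14), of "{l + sqrt T .. r - sqrt T}"] this assms(13), of b1]
  have "exp (- energy) \<ge> exp (- ((m\<^sup>2 / (9 * b0) + m\<^sup>2 / 9 + b1\<^sup>2 * b0) * T ^ 3))"
    by (simp add: c_def P'_def)
  moreover have "2 * c / sqrt (2 * pi) = 2 * m / (3 * b0 * sqrt (2 * pi)) / sqrt T"
    by (simp add: c_def)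
  ultimately have "exp (- energy) ^ k * (2 * c / sqrt (2 * pi)) ^ (k * card P')
      \<ge> exp (- ((m\<^sup>2 / (9 * b0) + m\<^sup>2 / 9 + b1\<^sup>2 * b0) * T ^ 3)) ^ k
        * (2 * m / (3 * b0 * sqrt (2 * pi)) / sqrt T) ^ (k * card P')"
    using c_nonneg m(1) \<open>b0 > 0\<close> T by (auto intro!: mult_right_mono power_mono)
  then show ?thesis
    using E_free_W_ge by (meson ennreal_leI order_trans)
qed

lemma exp_cube_div_le:
  fixes \<beta> q0 b0 T :: real and k N :: nat
  assumes T: "T \<ge> 1" and "\<beta> \<ge> 0" and "q0 > 0" and "b0 > 0" and "real N \<le> b0 * T"
  defines "C \<equiv> real k * \<beta> + real k * b0 * (\<bar>ln q0\<bar> + 1) + 1"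
  shows "exp (- C * T ^ 3) / C \<le> exp (- (\<beta> * T ^ 3)) ^ k * (q0 / sqrt T) ^ (k * N)"
proof -
  have "real (k * N) \<le> real k * b0 * T"
    using assms(5) by (simp add: mult_left_mono mult.assoc)
  then have q: "(q0 / sqrt T) ^ (k * N) \<ge> exp (- (real k * b0 * (\<bar>ln q0\<bar> + 1)) * T ^ 3)"
    using assms(2-4) T by (intro power_div_sqrt_ge_exp_cube) auto
  have "C \<ge> 1"
    using assms(2,4) by (simp add: C_def)
  then have "exp (- C * T ^ 3) / C \<le> exp (- C * T ^ 3)"
    by (simp add: divide_le_eq)
  also have "\<dots> \<le> exp (- (real k * \<beta> * T ^ 3)) * exp (- (real k * b0 * (\<bar>ln q0\<bar> + 1)) * T ^ 3)"
    using T by (simp add: C_def algebra_simps flip: exp_add)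
  also have "\<dots> \<le> exp (- (\<beta> * T ^ 3)) ^ k * (q0 / sqrt T) ^ (k * N)"
    using q by (intro mult_mono) (auto simp: exp_of_nat_mult[symmetric] mult.assoc)
  finally show ?thesis .
qed

text \<open>With \<open>m = min lam0 lam1\<close>, tubes of half-width at most \<open>m sqrt T / 3\<close> keep the curves
  apart and above the barrier; the exponent collects the energy bound of \<open>tube_scale_bounds\<close>
  and the loss from \<open>power_div_sqrt_ge_exp_cube\<close>.\<close>
definition bridge_constant :: "nat \<Rightarrow> real \<Rightarrow> real \<Rightarrow> real \<Rightarrow> real \<Rightarrow> real" where
  "bridge_constant k b0 b1 lam0 lam1 =
     (let m = min lam0 lam1
      in real k * (m\<^sup>2 / (9 * b0) + m\<^sup>2 / 9 + b1\<^sup>2 * b0)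
         + real k * b0 * (\<bar>ln (2 * m / (3 * b0 * sqrt (2 * pi)))\<bar> + 1) + 1)"

lemma bridge_constant_pos: "b0 > 0 \<Longrightarrow> bridge_constant k b0 b1 lam0 lam1 > 0"
  unfolding bridge_constant_def Let_def
  by (intro add_nonneg_pos add_nonneg_nonneg mult_nonneg_nonneg) auto

lemma E_free_W_ge_bridge_constant:
  fixes k :: nat and b0 b1 lam0 lam1 T l r :: real and am ap :: "nat \<Rightarrow> real"
    and g :: "real \<Rightarrow> real" and P :: "real set"
  assumes "k \<ge> 1" and "b0 > 0" and "b1 \<ge> 0" and "lam0 > 0" and "lam1 > 0" and T: "T \<ge> 1"
    and "g l = 0" and "g r = 0" and "finite P" and "P \<subseteq> {l<..<r}"
    and "P \<inter> {l + sqrt T .. r - sqrt T} \<noteq> {}"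
    and "r - l \<le> b0 * T" and "real (card P) \<le> b0 * T"
    and "\<forall>x\<in>{l..r}. \<forall>y\<in>{l..r}. \<bar>g x - g y\<bar> \<le> b1 * T * \<bar>x - y\<bar>"
    and "\<forall>j\<in>{1..<k}. am j - am (j+1) \<ge> lam0 * sqrt T \<and> ap j - ap (j+1) \<ge> lam0 * sqrt T"
    and "am k - g l \<ge> lam1 * T" and "ap k - g r \<ge> lam1 * T"
  defines "C \<equiv> bridge_constant k b0 b1 lam0 lam1"
  shows "E_free_W k l r am ap g (P \<inter> {l + sqrt T .. r - sqrt T}) \<ge> ennreal (exp (- C * T ^ 3) / C)"
proof -
  define m where "m = min lam0 lam1"
  have m: "0 < m" "m \<le> lam0" "m \<le> lam1"
    using assms(4,5) by (auto simp: m_def)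
  have "exp (- C * T ^ 3) / C
      \<le> exp (- ((m\<^sup>2 / (9 * b0) + m\<^sup>2 / 9 + b1\<^sup>2 * b0) * T ^ 3)) ^ k
        * (2 * m / (3 * b0 * sqrt (2 * pi)) / sqrt T) ^ (k * card (P \<inter> {l + sqrt T .. r - sqrt T}))"
    unfolding C_def bridge_constant_def Let_def m_def[symmetric]
    using T m(1) \<open>b0 > 0\<close> card_points_le[OF assms(9,13)] by (intro exp_cube_div_le) auto
  then show ?thesis
    using E_free_W_ge_tube_bound[OF assms(1-3) m assms(6-17)] by (meson ennreal_leI order_trans)
qed

theorem mainTheorem9:
  fixes k :: nat and b0 b1 lam0 lam1 :: real
  assumes "k \<ge> 1" and "b0 > 0" and "b1 > 0" and "lam0 > 0" and "lam1 > 0"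
  shows "\<exists>C1 > 0. \<forall>(b2::real) (T::real) (l::real) (r::real) (am::nat \<Rightarrow> real)
            (ap::nat \<Rightarrow> real) (g::real \<Rightarrow> real) (P::real set).
     b2 > 0 \<longrightarrow> T \<ge> 10 \<longrightarrow> l < r \<longrightarrow>
     g l = 0 \<longrightarrow> g r = 0 \<longrightarrow>
     finite P \<longrightarrow> P \<subseteq> {l<..<r} \<longrightarrow>
     P \<inter> {l + sqrt T .. r - sqrt T} \<noteq> {} \<longrightarrow>
     r - l \<le> b0 * T \<longrightarrow>
     real (card P) \<le> b0 * T \<longrightarrow>
     (\<forall>x\<in>{l..r}. \<forall>y\<in>{l..r}. \<bar>g x - g y\<bar> \<le> b1 * T * \<bar>x - y\<bar>) \<longrightarrow>
     (\<forall>j\<in>{1..<k}. am j - am (j+1) \<ge> lam0 * sqrt T \<and> ap j - ap (j+1) \<ge> lam0 * sqrt T) \<longrightarrow>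
     am k - g l \<ge> lam1 * T \<longrightarrow> ap k - g r \<ge> lam1 * T \<longrightarrow>
     am 1 - g l \<le> b2 * T\<^sup>2 \<longrightarrow> ap 1 - g r \<le> b2 * T\<^sup>2 \<longrightarrow>
     E_free_W k l r am ap g (P \<inter> {l + sqrt T .. r - sqrt T})
       \<ge> ennreal (exp (- C1 * T ^ 3) / C1)"
  using bridge_constant_pos[OF assms(2)] assms
  by (intro exI[of _ "bridge_constant k b0 b1 lam0 lam1"] conjI allI impI E_free_W_ge_bridge_constant) auto

end
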